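(* Let $T$ be a $C_{p^rq^s}$-transfer system, let $(x,y)$ be a vertex, and let $(a,b)$ be the lexicographically smallest vertex in the connected component of $(x,y)$ in $T$. Then $T$ contains the edge $(a,b)\to(x,y)$.
   Context: $p,q$ are distinct primes and $r,s\ge 0$ integers. The subgroups of $C_{p^rq^s}$ are identified with grid points $(i,j)$, $0\le i\le r$, $0\le j\le s$, where $(i,j)$ stands for $C_{p^iq^j}$. A $C_{p^rq^s}$-transfer system is a partial order $\to$ on these vertices such that: $(i_1,j_1)\to(i_2,j_2)$ implies $i_1\le i_2$, $j_1\le j_2$; it is reflexive and transitive; and $(i_1,j_1)\to(i_2,j_2)$ implies $(\min\{i_1,a\},\min\{j_1,b\})\to(\min\{i_2,a\},\min\{j_2,b\})$ for every vertex $(a,b)$. Connected components are those of the underlying undirected graph. Lexicographic order: $(a,b)<_L(c,d)$ if $a<c$, or $a=c$ and $b<d$. *)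

theory Defs
  imports Main "HOL-Computational_Algebra.Primes"
begin

text \<open>Vertices of the grid: (i,j) with 0 \<le> i \<le> r, 0 \<le> j \<le> s, standing for the
subgroup C_{p^i q^j} of C_{p^r q^s}.\<close>

definition grid :: "nat \<Rightarrow> nat \<Rightarrow> (nat \<times> nat) set" where
  "grid r s = {(i, j). i \<le> r \<and> j \<le> s}"

definition transfer_system ::
  "nat \<Rightarrow> nat \<Rightarrow> (nat \<times> nat \<Rightarrow> nat \<times> nat \<Rightarrow> bool) \<Rightarrow> bool" where
  "transfer_system r s T \<longleftrightarrow>
     (\<forall>u v. T u v \<longrightarrow> u \<in> grid r s \<and> v \<in> grid r s) \<and>
     (\<forall>u\<in>grid r s. T u u) \<and>
     (\<forall>u v w. T u v \<longrightarrow> T v w \<longrightarrow> T u w) \<and>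
     (\<forall>u v. T u v \<longrightarrow> T v u \<longrightarrow> u = v) \<and>
     (\<forall>i1 j1 i2 j2. T (i1, j1) (i2, j2) \<longrightarrow> i1 \<le> i2 \<and> j1 \<le> j2) \<and>
     (\<forall>i1 j1 i2 j2 a b. T (i1, j1) (i2, j2) \<longrightarrow> (a, b) \<in> grid r s \<longrightarrow>
        T (min i1 a, min j1 b) (min i2 a, min j2 b))"

definition connected_in :: "(nat \<times> nat \<Rightarrow> nat \<times> nat \<Rightarrow> bool) \<Rightarrow> nat \<times> nat \<Rightarrow> nat \<times> nat \<Rightarrow> bool" where
  "connected_in T u v \<longleftrightarrow> (\<lambda>x y. T x y \<or> T y x)\<^sup>*\<^sup>* u v"

definition lex_less :: "nat \<times> nat \<Rightarrow> nat \<times> nat \<Rightarrow> bool" where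
  "lex_less u v \<longleftrightarrow> fst u < fst v \<or> (fst u = fst v \<and> snd u < snd v)"

definition component :: "nat \<Rightarrow> nat \<Rightarrow> (nat \<times> nat \<Rightarrow> nat \<times> nat \<Rightarrow> bool) \<Rightarrow> nat \<times> nat \<Rightarrow> (nat \<times> nat) set" where
  "component r s T v = {u \<in> grid r s. connected_in T v u}"

end

theory Submission
  imports Defs
begin

text \<open>Any two vertices in one component have a common source: if w \<rightarrow> u and w \<rightarrow> v, and z \<rightarrow> v,
then restricting w \<rightarrow> v along z and z \<rightarrow> v along w shows that the componentwise minimum of w and z
transfers to both z and w. Since every edge decreases no coordinate, a common source of (x, y) and
the lexicographically smallest vertex (a, b) of the component lies in the component and is
componentwise below (a, b), hence equals (a, b).\<close>

lemma transfer_system_grid: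
  assumes "transfer_system r s T" and "T u v"
  shows "u \<in> grid r s" and "v \<in> grid r s"
  using assms unfolding transfer_system_def by blast+

lemma transfer_system_refl:
  assumes "transfer_system r s T" and "u \<in> grid r s"
  shows "T u u"
  using assms unfolding transfer_system_def by blast

lemma transfer_system_trans:
  assumes "transfer_system r s T" and "T u v" and "T v w"
  shows "T u w"
  using assms unfolding transfer_system_def by blast

lemma transfer_system_le:
  assumes "transfer_system r s T" and "T (i1, j1) (i2, j2)"
  shows "i1 \<le> i2" and "j1 \<le> j2"
  using assms unfolding transfer_system_def by blast+

lemma transfer_system_restrict:
  assumes "transfer_system r s T" and "T (i1, j1) (i2, j2)" and "(a, b) \<in> grid r s"
  shows "T (min i1 a, min j1 b) (min i2 a, min j2 b)"
  using assms unfolding transfer_system_def by blast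

lemma transfer_system_min_source:
  assumes ts: "transfer_system r s T"
    and wv: "T (w1, w2) (v1, v2)" and zv: "T (z1, z2) (v1, v2)"
  shows "T (min w1 z1, min w2 z2) (z1, z2)" and "T (min w1 z1, min w2 z2) (w1, w2)"
proof -
  have "T (min w1 z1, min w2 z2) (min v1 z1, min v2 z2)"
    using transfer_system_restrict[OF ts wv] transfer_system_grid(1)[OF ts zv] .
  moreover have "min v1 z1 = z1" "min v2 z2 = z2"
    using transfer_system_le[OF ts zv] by simp_all
  ultimately show "T (min w1 z1, min w2 z2) (z1, z2)" by simp
  have "T (min z1 w1, min z2 w2) (min v1 w1, min v2 w2)"
    using transfer_system_restrict[OF ts zv] transfer_system_grid(1)[OF ts wv] .
  moreover have "min v1 w1 = w1" "min v2 w2 = w2"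
    using transfer_system_le[OF ts wv] by simp_all
  ultimately show "T (min w1 z1, min w2 z2) (w1, w2)" by (simp add: min.commute)
qed

lemma connected_in_common_source:
  assumes ts: "transfer_system r s T" and u: "u \<in> grid r s"
    and "connected_in T u v"
  shows "\<exists>w. T w u \<and> T w v"
  using \<open>connected_in T u v\<close> unfolding connected_in_def
proof (induction rule: rtranclp_induct)
  case base
  show ?case using transfer_system_refl[OF ts u] by blast
next
  case (step v z)
  then obtain w where wu: "T w u" and wv: "T w v" by blast
  from step.hyps(2) show ?case
  proof
    assume "T v z"
    then show ?thesis using wu wv transfer_system_trans[OF ts] by blast
  next
    assume zv: "T z v"
    obtain w1 w2 z1 z2 v1 v2 where "w = (w1, w2)" "z = (z1, z2)" "v = (v1, v2)"
      by (cases w, cases z, cases v)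
    with wv zv transfer_system_min_source[OF ts] have
      "T (min w1 z1, min w2 z2) z" "T (min w1 z1, min w2 z2) w" by auto
    then show ?thesis using wu transfer_system_trans[OF ts] by blast
  qed
qed

theorem mainTheorem11:
  fixes p q r s x y a b :: nat
    and T :: "nat \<times> nat \<Rightarrow> nat \<times> nat \<Rightarrow> bool"
  assumes "prime p" and "prime q" and "p \<noteq> q"
    and "transfer_system r s T"
    and "(x, y) \<in> grid r s"
    and "(a, b) \<in> component r s T (x, y)"
    and "\<forall>u \<in> component r s T (x, y). \<not> lex_less u (a, b)"
  shows "T (a, b) (x, y)"
proof -
  note ts = \<open>transfer_system r s T\<close>
  have "connected_in T (x, y) (a, b)" using assms(6) unfolding component_def by blast
  then obtain w where "T w (x, y)" and "T w (a, b)"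
    using connected_in_common_source[OF ts assms(5)] by blast
  then obtain w1 w2 where to_xy: "T (w1, w2) (x, y)" and to_ab: "T (w1, w2) (a, b)"
    by (cases w) blast
  have "connected_in T (x, y) (w1, w2)"
    using to_xy unfolding connected_in_def by auto
  with transfer_system_grid(1)[OF ts to_xy] have "(w1, w2) \<in> component r s T (x, y)"
    unfolding component_def by blast
  with assms(7) have "\<not> lex_less (w1, w2) (a, b)" by blast
  with transfer_system_le[OF ts to_ab] have "(w1, w2) = (a, b)"
    unfolding lex_less_def by auto
  with to_xy show ?thesis by simp
qed

end
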